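(* Let $a,b,c,d$ be positive integers and let $G=K_{a,b,c,d}$ be the complete 4-partite graph with partite sets of sizes $a,b,c,d$. Then $\mathrm{ppn}(G)=1$ if and only if $a=b=c=d=1$.
   Context: A $k$-prime product distance labeling of a finite graph $G$ (for a positive integer $k$) is an injective map $L:V(G)\to\mathbb{Z}$ such that $|L(u)-L(v)|>1$ for all distinct vertices $u,v$ of $G$, and such that for every pair of adjacent vertices $u,v$ the integer $|L(u)-L(v)|$ has at most $k$ prime factors counted with multiplicity. The prime product number $\mathrm{ppn}(G)$ is the least positive integer $k$ such that $G$ has a $k$-prime product distance labeling. *)

theory Defs
  imports "HOL-Computational_Algebra.Primes"
begin

definition Omega :: "nat \<Rightarrow> nat" where
  "Omega n = size (prime_factorization n)"

text \<open>A finite simple graph is given by a vertex set V and a symmetric,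
  irreflexive adjacency relation E on V.\<close>
definition k_ppd_labeling :: "nat \<Rightarrow> 'v set \<Rightarrow> ('v \<Rightarrow> 'v \<Rightarrow> bool) \<Rightarrow> ('v \<Rightarrow> int) \<Rightarrow> bool" where
  "k_ppd_labeling k V E L \<longleftrightarrow>
     inj_on L V \<and>
     (\<forall>u\<in>V. \<forall>v\<in>V. u \<noteq> v \<longrightarrow> \<bar>L u - L v\<bar> > 1) \<and>
     (\<forall>u\<in>V. \<forall>v\<in>V. E u v \<longrightarrow> Omega (nat \<bar>L u - L v\<bar>) \<le> k)"

definition ppn :: "'v set \<Rightarrow> ('v \<Rightarrow> 'v \<Rightarrow> bool) \<Rightarrow> nat" where
  "ppn V E = (LEAST k. k > 0 \<and> (\<exists>L. k_ppd_labeling k V E L))"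

text \<open>Complete multipartite graph K_{s 0, ..., s (r-1)}: vertex (i,j) is the
  j-th vertex of part i; two vertices are adjacent iff they lie in different parts.\<close>
definition cmp_vertices :: "nat \<Rightarrow> (nat \<Rightarrow> nat) \<Rightarrow> (nat \<times> nat) set" where
  "cmp_vertices r s = {(i, j). i < r \<and> j < s i}"

definition cmp_adj :: "(nat \<times> nat) \<Rightarrow> (nat \<times> nat) \<Rightarrow> bool" where
  "cmp_adj u v \<longleftrightarrow> fst u \<noteq> fst v"

definition K4 :: "nat \<Rightarrow> nat \<Rightarrow> nat \<Rightarrow> nat \<Rightarrow> nat \<Rightarrow> nat" where
  "K4 a b c d i = (if i = 0 then a else if i = 1 then b else if i = 2 then c else d)"

end

theory Submission
  imports Defs "HOL-Library.Countable_Set"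
begin

text \<open>In a labelling with prime differences along edges, suppose a part has two vertices,
  labelled x and y, and pick labels z, u, w of vertices in the three other parts. Any three
  integers at pairwise prime distance cannot share a parity, so two of z, u, w, say z and u,
  share a parity and x, y, w share the other one. Then x and y lie at distance 2 from w,
  hence are w - 2 and w + 2, so z - w - 2, z - w, z - w + 2 are all prime up to sign.
  One of them is divisible by 3, which forces z - w = \<plusminus>5; likewise u - w = \<plusminus>5, contradicting
  |z - u| = 2. Conversely the labels 0, 2, 5, 7 of K_{1,1,1,1} have prime differences.\<close>

definition prime_dist :: "int \<Rightarrow> int \<Rightarrow> bool" where
  "prime_dist x y \<longleftrightarrow> prime \<bar>x - y\<bar>"

lemma prime_dist_commute: "prime_dist x y \<longleftrightarrow> prime_dist y x"
  unfolding prime_dist_def by (simp add: abs_minus_commute)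

lemma prime_dist_ge_2: "prime_dist x y \<Longrightarrow> \<bar>x - y\<bar> \<ge> 2"
  unfolding prime_dist_def by (rule prime_ge_2_int)

lemma prime_dist_dvd_eq:
  assumes "prime_dist x y" "prime (q::int)" "q dvd x - y"
  shows "\<bar>x - y\<bar> = q"
  using primes_dvd_imp_eq[of q "\<bar>x - y\<bar>"] assms unfolding prime_dist_def by simp

lemma prime_dist_even: "prime_dist x y \<Longrightarrow> even (x - y) \<Longrightarrow> \<bar>x - y\<bar> = 2"
  by (rule prime_dist_dvd_eq) auto

lemma prime_dist_dvd_3: "prime_dist x y \<Longrightarrow> 3 dvd (x - y) \<Longrightarrow> \<bar>x - y\<bar> = 3"
proof -
  have "prime (3::int)"
    unfolding prime_int_nat_transfer by (simp add: prime_nat_iff' atLeastLessThan_nat_numeral)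
  then show "prime_dist x y \<Longrightarrow> 3 dvd (x - y) \<Longrightarrow> \<bar>x - y\<bar> = 3"
    by (simp add: prime_dist_dvd_eq)
qed

lemma no_prime_dist_triangle_same_parity:
  assumes "prime_dist x y" "prime_dist y z" "prime_dist x z" "even (x - y)" "even (y - z)"
  shows False
proof -
  have "even (x - z)" using assms(4,5) by auto
  with assms(3) have "\<bar>x - z\<bar> = 2" by (rule prime_dist_even)
  moreover have "\<bar>x - y\<bar> = 2" "\<bar>y - z\<bar> = 2" using assms by (auto intro: prime_dist_even)
  ultimately show False by arith
qed

lemma prime_dist_triplet:
  assumes "prime_dist z (w - 2)" "prime_dist z w" "prime_dist z (w + 2)"
  shows "\<bar>z - w\<bar> = 5"
proof -
  have "3 dvd z - (w - 2) \<or> 3 dvd z - w \<or> 3 dvd z - (w + 2)" by presburger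
  then have "\<bar>z - (w - 2)\<bar> = 3 \<or> \<bar>z - w\<bar> = 3 \<or> \<bar>z - (w + 2)\<bar> = 3"
    using assms prime_dist_dvd_3 by blast
  moreover have "\<bar>z - (w - 2)\<bar> \<ge> 2" "\<bar>z - w\<bar> \<ge> 2" "\<bar>z - (w + 2)\<bar> \<ge> 2"
    using assms by (auto intro: prime_dist_ge_2)
  ultimately show ?thesis by arith
qed

lemma no_prime_dist_K2111_same_parity:
  assumes "x \<noteq> y"
    and "prime_dist x z" "prime_dist x u" "prime_dist x w"
    and "prime_dist y z" "prime_dist y u" "prime_dist y w"
    and "prime_dist z u" "prime_dist z w" "prime_dist u w"
    and "even (z - u)"
  shows False
proof -
  note sym = prime_dist_commute
  have "odd (x - z)" "odd (y - z)" "odd (w - z)"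
    using no_prime_dist_triangle_same_parity assms sym by metis+
  then have "even (x - w)" "even (y - w)" by auto
  then have "\<bar>x - w\<bar> = 2" "\<bar>y - w\<bar> = 2" using assms by (auto intro: prime_dist_even)
  with \<open>x \<noteq> y\<close> have "x = w - 2 \<and> y = w + 2 \<or> x = w + 2 \<and> y = w - 2" by arith
  then have "prime_dist v (w - 2) \<and> prime_dist v (w + 2)" if "v = z \<or> v = u" for v
    using that assms sym by auto
  then have "\<bar>z - w\<bar> = 5" "\<bar>u - w\<bar> = 5"
    using assms prime_dist_triplet by (auto simp: sym)
  moreover have "\<bar>z - u\<bar> = 2" using assms by (auto intro: prime_dist_even)
  ultimately show False by arith
qed

lemma no_prime_dist_K2111:
  assumes "x \<noteq> y"
    and "prime_dist x z" "prime_dist x u" "prime_dist x w"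
    and "prime_dist y z" "prime_dist y u" "prime_dist y w"
    and "prime_dist z u" "prime_dist z w" "prime_dist u w"
  shows False
proof -
  note sym = prime_dist_commute
  consider "even (z - u)" | "even (z - w)" | "even (u - w)" by auto
  then show False
  proof cases
    case 1
    with assms show False by (rule no_prime_dist_K2111_same_parity)
  next
    case 2
    with assms show False by (intro no_prime_dist_K2111_same_parity[of x y z w u]) (auto simp: sym)
  next
    case 3
    with assms show False by (intro no_prime_dist_K2111_same_parity[of x y u w z]) (auto simp: sym)
  qed
qed

lemma Omega_le_1_iff_prime:
  assumes "n \<ge> 2"
  shows "Omega n \<le> 1 \<longleftrightarrow> prime n"
proof
  assume "Omega n \<le> 1"
  moreover have "prime_factorization n \<noteq> {#}"
    using assms by (simp add: prime_factorization_empty_iff)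
  ultimately obtain p where p: "prime_factorization n = {#p#}"
    unfolding Omega_def by (metis One_nat_def le_Suc_eq le_zero_eq size_1_singleton_mset size_eq_0_iff_empty)
  then have "prime p" by (metis in_prime_factors_imp_prime singletonI set_mset_single)
  with p show "prime n" using assms prod_mset_prime_factorization_nat[of n] by simp
next
  assume "prime n"
  then show "Omega n \<le> 1" unfolding Omega_def by (simp add: prime_factorization_prime)
qed

lemma k_ppd_labeling_1_iff:
  assumes "\<And>u. \<not> E u u"
  shows "k_ppd_labeling 1 V E L \<longleftrightarrow>
    inj_on L V \<and> (\<forall>u\<in>V. \<forall>v\<in>V. u \<noteq> v \<longrightarrow> \<bar>L u - L v\<bar> > 1) \<and>
    (\<forall>u\<in>V. \<forall>v\<in>V. E u v \<longrightarrow> prime_dist (L u) (L v))"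
proof -
  have "Omega (nat \<bar>L u - L v\<bar>) \<le> 1 \<longleftrightarrow> prime_dist (L u) (L v)"
    if "\<forall>u\<in>V. \<forall>v\<in>V. u \<noteq> v \<longrightarrow> \<bar>L u - L v\<bar> > 1" "u \<in> V" "v \<in> V" "E u v" for u v
  proof -
    have "u \<noteq> v" using assms \<open>E u v\<close> by metis
    with that have "\<bar>L u - L v\<bar> \<ge> 2" by fastforce
    then show ?thesis
      using Omega_le_1_iff_prime[of "nat \<bar>L u - L v\<bar>"] unfolding prime_dist_def by simp
  qed
  then show ?thesis
    unfolding k_ppd_labeling_def by blast
qed

lemma k_ppd_labeling_exists:
  assumes "finite V"
  shows "\<exists>k L. k > 0 \<and> k_ppd_labeling k V E L"
proof -
  define L :: "'a \<Rightarrow> int" where "L v = 2 * int (to_nat_on V v)" for v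
  define k where "k = Suc (Max ((\<lambda>(u, v). Omega (nat \<bar>L u - L v\<bar>)) ` (V \<times> V)))"
  have inj: "inj_on (to_nat_on V) V"
    using assms by (simp add: inj_on_to_nat_on countable_finite)
  have "k_ppd_labeling k V E L"
    unfolding k_ppd_labeling_def
  proof (intro conjI ballI impI)
    show "inj_on L V" using inj unfolding L_def inj_on_def by auto
  next
    fix u v assume "u \<in> V" "v \<in> V" "u \<noteq> v"
    then have "to_nat_on V u \<noteq> to_nat_on V v" using inj by (metis inj_on_def)
    then show "\<bar>L u - L v\<bar> > 1" unfolding L_def by arith
  next
    fix u v assume "u \<in> V" "v \<in> V"
    then have "Omega (nat \<bar>L u - L v\<bar>) \<le> Max ((\<lambda>(u, v). Omega (nat \<bar>L u - L v\<bar>)) ` (V \<times> V))"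
      using assms by (intro Max_ge) auto
    then show "Omega (nat \<bar>L u - L v\<bar>) \<le> k" unfolding k_def by simp
  qed
  then show ?thesis unfolding k_def by blast
qed

lemma ppn_eq_1_iff:
  assumes "finite V"
  shows "ppn V E = 1 \<longleftrightarrow> (\<exists>L. k_ppd_labeling 1 V E L)"
proof
  assume "ppn V E = 1"
  have "\<exists>k. k > 0 \<and> (\<exists>L. k_ppd_labeling k V E L)"
    using k_ppd_labeling_exists[OF assms] by blast
  then have "\<exists>L. k_ppd_labeling (ppn V E) V E L"
    unfolding ppn_def by (rule LeastI2_ex) blast
  with \<open>ppn V E = 1\<close> show "\<exists>L. k_ppd_labeling 1 V E L" by simp
next
  assume "\<exists>L. k_ppd_labeling 1 V E L"
  then show "ppn V E = 1"
    unfolding ppn_def by (intro Least_equality) auto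
qed

lemma finite_cmp_vertices: "finite (cmp_vertices r s)"
proof -
  have "cmp_vertices r s = Sigma {..<r} (\<lambda>i. {..<s i})" unfolding cmp_vertices_def by auto
  then show ?thesis by simp
qed

lemma cmp_adj_irrefl: "\<not> cmp_adj u u"
  unfolding cmp_adj_def by simp

lemma cmp_no_1_ppd_labeling_if_K2111:
  assumes "k_ppd_labeling 1 (cmp_vertices r s) cmp_adj L"
    and "distinct [i, j, k, l]" "i < r" "j < r" "k < r" "l < r"
    and "s i \<ge> 2" "s j > 0" "s k > 0" "s l > 0"
  shows False
proof -
  let ?V = "cmp_vertices r s"
  have dist: "\<bar>L u - L v\<bar> > 1" and prime: "cmp_adj u v \<Longrightarrow> prime_dist (L u) (L v)"
    if "u \<in> ?V" "v \<in> ?V" "u \<noteq> v" for u v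
    using assms(1) that unfolding k_ppd_labeling_1_iff[OF cmp_adj_irrefl] by auto
  have V: "(i, 0) \<in> ?V" "(i, 1) \<in> ?V" "(j, 0) \<in> ?V" "(k, 0) \<in> ?V" "(l, 0) \<in> ?V"
    using assms unfolding cmp_vertices_def by auto
  show False
    by (rule no_prime_dist_K2111[of "L (i, 0)" "L (i, 1)" "L (j, 0)" "L (k, 0)" "L (l, 0)"])
      (use dist[OF V(1,2)] prime V assms(2) in \<open>auto simp: cmp_adj_def\<close>)
qed

lemma K1111_prime_labeling:
  "k_ppd_labeling 1 (cmp_vertices 4 (K4 1 1 1 1)) cmp_adj (\<lambda>(i, _). [0, 2, 5, 7] ! i)"
proof -
  have V: "cmp_vertices 4 (K4 1 1 1 1) = {(0, 0), (1, 0), (2, 0), (3, 0)}"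
    unfolding cmp_vertices_def K4_def by (auto simp: eval_nat_numeral less_Suc_eq)
  have "prime (n::int)" if "n \<in> {2, 3, 5, 7}" for n
    using that unfolding prime_int_nat_transfer by (auto simp: prime_nat_iff' atLeastLessThan_nat_numeral)
  then show ?thesis
    unfolding k_ppd_labeling_1_iff[OF cmp_adj_irrefl] V prime_dist_def cmp_adj_def inj_on_def
    by auto
qed

theorem mainTheorem8:
  fixes a b c d :: nat
  assumes "a > 0" "b > 0" "c > 0" "d > 0"
  shows "ppn (cmp_vertices 4 (K4 a b c d)) cmp_adj = 1 \<longleftrightarrow> a = 1 \<and> b = 1 \<and> c = 1 \<and> d = 1"
proof -
  let ?V = "cmp_vertices 4 (K4 a b c d)"
  have "ppn ?V cmp_adj = 1 \<longleftrightarrow> (\<exists>L. k_ppd_labeling 1 ?V cmp_adj L)"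
    by (rule ppn_eq_1_iff[OF finite_cmp_vertices])
  also have "\<dots> \<longleftrightarrow> a = 1 \<and> b = 1 \<and> c = 1 \<and> d = 1"
  proof
    assume "\<exists>L. k_ppd_labeling 1 ?V cmp_adj L"
    then obtain L where L: "k_ppd_labeling 1 ?V cmp_adj L" ..
    note no_K2111 = cmp_no_1_ppd_labeling_if_K2111[OF L]
    show "a = 1 \<and> b = 1 \<and> c = 1 \<and> d = 1"
    proof (rule ccontr)
      assume "\<not> ?thesis"
      with assms consider "a \<ge> 2" | "b \<ge> 2" | "c \<ge> 2" | "d \<ge> 2" by linarith
      then show False
        using no_K2111[of 0 1 2 3] no_K2111[of 1 0 2 3] no_K2111[of 2 0 1 3] no_K2111[of 3 0 1 2]
        by cases (use assms in \<open>auto simp: K4_def\<close>)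
    qed
  next
    assume "a = 1 \<and> b = 1 \<and> c = 1 \<and> d = 1"
    then show "\<exists>L. k_ppd_labeling 1 ?V cmp_adj L" using K1111_prime_labeling by auto
  qed
  finally show ?thesis .
qed

end
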